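(* Let $(H,R)$ be a semiquasitriangular Hopf algebra. For each $h\in H$, $(\mathrm{id}_H\otimes\Delta)(\nu(h))\in H\otimes\operatorname{Z}(H)\otimes H$.
   Context: All vector spaces are over a field $k$, $\otimes=\otimes_k$. For a Hopf algebra $H$ with comultiplication $\Delta$, counit $\epsilon$, antipode $S$, we use Sweedler notation $\Delta(h)=h_1\otimes h_2$, etc. $\operatorname{Z}(H)$ is the centre of $H$. For $R\in H\otimes H$ we write $R=R^{(1)}\otimes R^{(2)}$ (summation understood); $R'^{(1)}\otimes R'^{(2)}$ denotes another copy of $R$. Definition (semiquasitriangular Hopf algebra): a pair $(H,R)$ with $H$ a Hopf algebra with bijective antipode and $R\in H\otimes H$ invertible such that (1) $R^{(1)}_1\otimes R^{(1)}_2\otimes R^{(2)} = R^{(1)}\otimes R'^{(1)}\otimes R^{(2)}R'^{(2)}$; (2) $R^{(1)}\otimes R^{(2)}_1\otimes R^{(2)}_2 = R^{(1)}R'^{(1)}\otimes R'^{(2)}\otimes R^{(2)}$; (3) $R^{(1)}\otimes R^{(2)}_2R'^{(1)}\otimes R^{(2)}_1R'^{(2)} = R^{(1)}\otimes R'^{(1)}R^{(2)}_1\otimes R'^{(2)}R^{(2)}_2$; (4) $R^{(1)}_2R'^{(1)}\otimes R^{(1)}_1R'^{(2)}\otimes R^{(2)} = R'^{(1)}R^{(1)}_1\otimes R'^{(2)}R^{(1)}_2\otimes R^{(2)}$; (5) $\nu(h):=R^{(2)}h_2R'^{(2)}\otimes S(h_1)S(R^{(1)})h_3R'^{(1)}\in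 H\otimes\operatorname{Z}(H)$ for all $h\in H$; (6) $\nu(h)=R^{(1)}h_2R'^{(1)}\otimes S(R'^{(2)})S(h_1)R^{(2)}h_3$ for all $h\in H$. The map $\nu$ in the claim is the one defined in (5). *)

theory Defs
  imports Main "HOL.Vector_Spaces"
begin

text \<open>The Hopf algebra H is a
type 'h whose ring structure (class ring_1) is the algebra structure of H, with a scalar
multiplication sc making it a k-vector space and a k-algebra. Elements of H (x) H and
H (x) H (x) H are represented by finite formal sums, i.e. lists of pairs / triples; two
such lists represent the same tensor iff every bilinear / trilinear form H x H (x H) -> k
takes the same value on them (over a field this is exactly equality in the algebraic
tensor product).\<close>

definition klin :: "('k::field \<Rightarrow> 'h::ab_group_add \<Rightarrow> 'h) \<Rightarrow> ('h \<Rightarrow> 'k) \<Rightarrow> bool" where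
  "klin sc f \<longleftrightarrow> Vector_Spaces.linear sc (*) f"

definition bilin_form :: "('k::field \<Rightarrow> 'h::ab_group_add \<Rightarrow> 'h) \<Rightarrow> ('h \<Rightarrow> 'h \<Rightarrow> 'k) \<Rightarrow> bool" where
  "bilin_form sc \<beta> \<longleftrightarrow> (\<forall>b. klin sc (\<lambda>a. \<beta> a b)) \<and> (\<forall>a. klin sc (\<beta> a))"

definition trilin_form :: "('k::field \<Rightarrow> 'h::ab_group_add \<Rightarrow> 'h) \<Rightarrow> ('h \<Rightarrow> 'h \<Rightarrow> 'h \<Rightarrow> 'k) \<Rightarrow> bool" where
  "trilin_form sc \<tau> \<longleftrightarrow> (\<forall>b c. klin sc (\<lambda>a. \<tau> a b c)) \<and> (\<forall>a c. klin sc (\<lambda>b. \<tau> a b c))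
      \<and> (\<forall>a b. klin sc (\<tau> a b))"

definition teq2 :: "('k::field \<Rightarrow> 'h::ab_group_add \<Rightarrow> 'h) \<Rightarrow> ('h \<times> 'h) list \<Rightarrow> ('h \<times> 'h) list \<Rightarrow> bool" where
  "teq2 sc xs ys \<longleftrightarrow> (\<forall>\<beta>. bilin_form sc \<beta> \<longrightarrow>
      (\<Sum>(a,b)\<leftarrow>xs. \<beta> a b) = (\<Sum>(a,b)\<leftarrow>ys. \<beta> a b))"

definition teq3 :: "('k::field \<Rightarrow> 'h::ab_group_add \<Rightarrow> 'h) \<Rightarrow> ('h \<times> 'h \<times> 'h) list \<Rightarrow> ('h \<times> 'h \<times> 'h) list \<Rightarrow> bool" where
  "teq3 sc xs ys \<longleftrightarrow> (\<forall>\<tau>. trilin_form sc \<tau> \<longrightarrow>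
      (\<Sum>(a,b,c)\<leftarrow>xs. \<tau> a b c) = (\<Sum>(a,b,c)\<leftarrow>ys. \<tau> a b c))"

definition centre :: "'h::ring_1 set" where
  "centre = {z. \<forall>x. z * x = x * z}"

definition tmul2 :: "('h::ring_1 \<times> 'h) list \<Rightarrow> ('h \<times> 'h) list \<Rightarrow> ('h \<times> 'h) list" where
  "tmul2 xs ys = [(a * c, b * d). (a,b) \<leftarrow> xs, (c,d) \<leftarrow> ys]"

definition Delta3 :: "('h \<Rightarrow> ('h \<times> 'h) list) \<Rightarrow> 'h \<Rightarrow> ('h \<times> 'h \<times> 'h) list" where
  "Delta3 \<Delta> h = [(x1, x2, y). (x,y) \<leftarrow> \<Delta> h, (x1,x2) \<leftarrow> \<Delta> x]"

definition hopf_algebra ::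
  "('k::field \<Rightarrow> 'h::ring_1 \<Rightarrow> 'h) \<Rightarrow> ('h \<Rightarrow> ('h \<times> 'h) list) \<Rightarrow> ('h \<Rightarrow> 'k) \<Rightarrow> ('h \<Rightarrow> 'h) \<Rightarrow> bool" where
  "hopf_algebra sc \<Delta> \<epsilon> S \<longleftrightarrow>
     vector_space sc
   \<and> (\<forall>c a b. sc c (a * b) = sc c a * b \<and> sc c (a * b) = a * sc c b)
   \<comment> \<open>comultiplication: linear, coassociative, algebra map\<close>
   \<and> (\<forall>a b. teq2 sc (\<Delta> (a + b)) (\<Delta> a @ \<Delta> b))
   \<and> (\<forall>c a. teq2 sc (\<Delta> (sc c a)) (map (\<lambda>(x,y). (sc c x, y)) (\<Delta> a)))
   \<and> (\<forall>h. teq3 sc (Delta3 \<Delta> h) [(x, y1, y2). (x,y) \<leftarrow> \<Delta> h, (y1,y2) \<leftarrow> \<Delta> y])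
   \<and> (\<forall>a b. teq2 sc (\<Delta> (a * b)) (tmul2 (\<Delta> a) (\<Delta> b)))
   \<and> teq2 sc (\<Delta> 1) [(1, 1)]
   \<comment> \<open>counit: linear, algebra map, counit axioms\<close>
   \<and> klin sc \<epsilon>
   \<and> (\<forall>a b. \<epsilon> (a * b) = \<epsilon> a * \<epsilon> b) \<and> \<epsilon> 1 = 1
   \<and> (\<forall>h. (\<Sum>(x,y)\<leftarrow>\<Delta> h. sc (\<epsilon> x) y) = h)
   \<and> (\<forall>h. (\<Sum>(x,y)\<leftarrow>\<Delta> h. sc (\<epsilon> y) x) = h)
   \<comment> \<open>antipode: linear, bijective, antipode axioms\<close>
   \<and> Vector_Spaces.linear sc sc S
   \<and> bij S
   \<and> (\<forall>h. (\<Sum>(x,y)\<leftarrow>\<Delta> h. S x * y) = sc (\<epsilon> h) 1)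
   \<and> (\<forall>h. (\<Sum>(x,y)\<leftarrow>\<Delta> h. x * S y) = sc (\<epsilon> h) 1)"

definition nu :: "('h::ring_1 \<Rightarrow> ('h \<times> 'h) list) \<Rightarrow> ('h \<Rightarrow> 'h) \<Rightarrow> ('h \<times> 'h) list \<Rightarrow> 'h \<Rightarrow> ('h \<times> 'h) list" where
  "nu \<Delta> S R h = [(r2 * h2 * s2, S h1 * S r1 * h3 * s1).
                    (r1,r2) \<leftarrow> R, (h1,h2,h3) \<leftarrow> Delta3 \<Delta> h, (s1,s2) \<leftarrow> R]"

definition semiquasitriangular ::
  "('k::field \<Rightarrow> 'h::ring_1 \<Rightarrow> 'h) \<Rightarrow> ('h \<Rightarrow> ('h \<times> 'h) list) \<Rightarrow> ('h \<Rightarrow> 'k) \<Rightarrow> ('h \<Rightarrow> 'h)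
     \<Rightarrow> ('h \<times> 'h) list \<Rightarrow> bool" where
  "semiquasitriangular sc \<Delta> \<epsilon> S R \<longleftrightarrow>
     hopf_algebra sc \<Delta> \<epsilon> S
   \<comment> \<open>R is invertible in H (x) H\<close>
   \<and> (\<exists>Q. teq2 sc (tmul2 R Q) [(1,1)] \<and> teq2 sc (tmul2 Q R) [(1,1)])
   \<comment> \<open>(1)\<close>
   \<and> teq3 sc [(x1, x2, r2). (r1,r2) \<leftarrow> R, (x1,x2) \<leftarrow> \<Delta> r1]
             [(r1, s1, r2 * s2). (r1,r2) \<leftarrow> R, (s1,s2) \<leftarrow> R]
   \<comment> \<open>(2)\<close>
   \<and> teq3 sc [(r1, y1, y2). (r1,r2) \<leftarrow> R, (y1,y2) \<leftarrow> \<Delta> r2]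
             [(r1 * s1, s2, r2). (r1,r2) \<leftarrow> R, (s1,s2) \<leftarrow> R]
   \<comment> \<open>(3)\<close>
   \<and> teq3 sc [(r1, y2 * s1, y1 * s2). (r1,r2) \<leftarrow> R, (y1,y2) \<leftarrow> \<Delta> r2, (s1,s2) \<leftarrow> R]
             [(r1, s1 * y1, s2 * y2). (r1,r2) \<leftarrow> R, (y1,y2) \<leftarrow> \<Delta> r2, (s1,s2) \<leftarrow> R]
   \<comment> \<open>(4)\<close>
   \<and> teq3 sc [(x2 * s1, x1 * s2, r2). (r1,r2) \<leftarrow> R, (x1,x2) \<leftarrow> \<Delta> r1, (s1,s2) \<leftarrow> R]
             [(s1 * x1, s2 * x2, r2). (r1,r2) \<leftarrow> R, (x1,x2) \<leftarrow> \<Delta> r1, (s1,s2) \<leftarrow> R]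
   \<comment> \<open>(5): nu(h) lies in H (x) Z(H)\<close>
   \<and> (\<forall>h. \<exists>ys. (\<forall>(a,z) \<in> set ys. z \<in> centre) \<and> teq2 sc (nu \<Delta> S R h) ys)
   \<comment> \<open>(6)\<close>
   \<and> (\<forall>h. teq2 sc (nu \<Delta> S R h)
            [(r1 * h2 * s1, S s2 * S h1 * r2 * h3).
               (r1,r2) \<leftarrow> R, (h1,h2,h3) \<leftarrow> Delta3 \<Delta> h, (s1,s2) \<leftarrow> R])"

end

theory Submission
  imports Defs
begin

text \<open>Multiplicativity of the comultiplication, the identity Delta(S a) = S(a_2) (x) S(a_1)
  and axiom (1), applied once to each copy of R, turn (id (x) Delta) nu(h) into
  R^(2) nu(h_2)^(1) R'^(2) (x) nu(h_2)^(2) (x) S(h_1) S(R^(1)) h_3 R'^(1)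
  after a relabelling by coassociativity. The middle tensor factor is now the second factor
  of nu(h_2), which is central by (5).
  Tensor identities are checked by evaluating bi- and trilinear forms on Sweedler sums.\<close>


definition psum :: "('a \<times> 'b) list \<Rightarrow> ('a \<Rightarrow> 'b \<Rightarrow> 'c::comm_monoid_add) \<Rightarrow> 'c" where
  "psum L F = (\<Sum>(x,y)\<leftarrow>L. F x y)"

lemma psum_Nil [simp]: "psum [] F = 0"
  by (simp add: psum_def)

lemma psum_Cons [simp]: "psum (p # L) F = F (fst p) (snd p) + psum L F"
  by (simp add: psum_def split_def)

lemma psum_append [simp]: "psum (L @ M) F = psum L F + psum M F"
  by (simp add: psum_def)

lemma psum_add: "psum L (\<lambda>x y. F x y + G x y) = psum L F + psum L G"
  by (induction L) (auto simp: algebra_simps)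

lemma psum_cmult: "psum L (\<lambda>x y. c * F x y) = (c::'c::semiring_0) * psum L F"
  by (induction L) (auto simp: algebra_simps)

lemma psum_zero [simp]: "psum L (\<lambda>x y. 0) = 0"
  by (induction L) auto

lemma psum_cong: "(\<And>x y. (x,y) \<in> set L \<Longrightarrow> F x y = G x y) \<Longrightarrow> psum L F = psum L G"
  by (induction L) auto

lemma psum_swap: "psum L (\<lambda>x y. psum M (F x y)) = psum M (\<lambda>u v. psum L (\<lambda>x y. F x y u v))"
  by (induction L) (auto simp: psum_add)

lemma psum_swap_nested:
  "psum L (\<lambda>x y. psum (M x y) (\<lambda>u v. psum N (F x y u v)))
   = psum N (\<lambda>e f. psum L (\<lambda>x y. psum (M x y) (\<lambda>u v. F x y u v e f)))"
  by (subst psum_cong[OF psum_swap]) (rule psum_swap)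

lemma sum_list_map_concat: "sum_list (map f (concat xss)) = (\<Sum>xs\<leftarrow>xss. sum_list (map f xs))"
  by (induction xss) auto

lemma psum_concat_map: "psum (concat (map f L)) F = psum L (\<lambda>x y. psum (f (x,y)) F)"
  by (induction L) auto

lemma psum_map: "psum (map f L) F = psum L (\<lambda>x y. F (fst (f (x,y))) (snd (f (x,y))))"
  by (induction L) auto

lemma vector_space_field: "vector_space ((*) :: 'k::field \<Rightarrow> 'k \<Rightarrow> 'k)"
  by unfold_locales (auto simp: algebra_simps)

context vector_space
begin

lemma klin_iff: "klin scale f \<longleftrightarrow> (\<forall>x y. f (x + y) = f x + f y) \<and> (\<forall>c x. f (c *s x) = c * f x)"
  by (auto simp: klin_def linear_iff vector_space_axioms vector_space_field)

lemma klin_psum_push: "klin scale f \<Longrightarrow> f (psum L G) = psum L (\<lambda>x y. f (G x y))"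
proof (induction L)
  case Nil
  then show ?case by (metis klin_iff add_cancel_right_right psum_Nil)
qed (simp add: klin_iff)

lemma klin_psum: "(\<And>u v. klin scale (\<lambda>x. F x u v)) \<Longrightarrow> klin scale (\<lambda>x. psum L (F x))"
  by (induction L) (auto simp: klin_iff algebra_simps)

lemma klin_compose: "klin scale f \<Longrightarrow> Vector_Spaces.linear scale scale g \<Longrightarrow> klin scale (\<lambda>x. f (g x))"
  using vector_space_axioms by (simp add: klin_iff linear_iff)

lemma bilin_formI:
  "(\<And>b. klin scale (\<lambda>a. \<beta> a b)) \<Longrightarrow> (\<And>a. klin scale (\<beta> a)) \<Longrightarrow> bilin_form scale \<beta>"
  by (simp add: bilin_form_def)

lemma trilin_formI:
  "(\<And>b c. klin scale (\<lambda>a. \<tau> a b c)) \<Longrightarrow> (\<And>a c. klin scale (\<lambda>b. \<tau> a b c))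
   \<Longrightarrow> (\<And>a b. klin scale (\<tau> a b)) \<Longrightarrow> trilin_form scale \<tau>"
  by (simp add: trilin_form_def)

lemma bilin_form_linear_fst:
  "bilin_form scale \<beta> \<Longrightarrow> Vector_Spaces.linear scale scale g \<Longrightarrow> klin scale (\<lambda>x. \<beta> (g x) b)"
  by (simp add: bilin_form_def klin_compose[of "\<lambda>a. \<beta> a b" g])

lemma bilin_form_linear_snd:
  "bilin_form scale \<beta> \<Longrightarrow> Vector_Spaces.linear scale scale g \<Longrightarrow> klin scale (\<lambda>x. \<beta> a (g x))"
  by (simp add: bilin_form_def klin_compose[of "\<beta> a" g])

lemma trilin_form_linear_fst:
  "trilin_form scale \<tau> \<Longrightarrow> Vector_Spaces.linear scale scale g \<Longrightarrow> klin scale (\<lambda>x. \<tau> (g x) b c)"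
  by (simp add: trilin_form_def klin_compose[of "\<lambda>a. \<tau> a b c" g])

lemma trilin_form_linear_snd:
  "trilin_form scale \<tau> \<Longrightarrow> Vector_Spaces.linear scale scale g \<Longrightarrow> klin scale (\<lambda>x. \<tau> a (g x) c)"
  by (simp add: trilin_form_def klin_compose[of "\<lambda>b. \<tau> a b c" g])

lemma trilin_form_linear_thd:
  "trilin_form scale \<tau> \<Longrightarrow> Vector_Spaces.linear scale scale g \<Longrightarrow> klin scale (\<lambda>x. \<tau> a b (g x))"
  by (simp add: trilin_form_def klin_compose[of "\<tau> a b" g])

end

lemma teq2D: "teq2 sc xs ys \<Longrightarrow> bilin_form sc \<beta> \<Longrightarrow> psum xs \<beta> = psum ys \<beta>"
  by (simp add: teq2_def psum_def)

lemma teq3_trans: "teq3 sc xs ys \<Longrightarrow> teq3 sc ys zs \<Longrightarrow> teq3 sc xs zs"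
  by (simp add: teq3_def)

locale hopf =
  fixes sc :: "'k::field \<Rightarrow> 'h::ring_1 \<Rightarrow> 'h" and \<Delta> :: "'h \<Rightarrow> ('h \<times> 'h) list"
    and \<epsilon> :: "'h \<Rightarrow> 'k" and S :: "'h \<Rightarrow> 'h"
  assumes hopf_algebra: "hopf_algebra sc \<Delta> \<epsilon> S"
begin

sublocale vector_space sc
  using hopf_algebra by (simp add: hopf_algebra_def)

lemma scale_mult_left [simp]: "sc c a * b = sc c (a * b)"
  using hopf_algebra by (simp add: hopf_algebra_def)

lemma scale_mult_right [simp]: "a * sc c b = sc c (a * b)"
  using hopf_algebra by (simp add: hopf_algebra_def)

lemma linear_mult_left: "Vector_Spaces.linear sc sc g \<Longrightarrow> Vector_Spaces.linear sc sc (\<lambda>x. b * g x)"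
  by (simp add: linear_iff distrib_left)

lemma linear_mult_right: "Vector_Spaces.linear sc sc g \<Longrightarrow> Vector_Spaces.linear sc sc (\<lambda>x. g x * b)"
  by (simp add: linear_iff distrib_right)

lemma linear_antipode: "Vector_Spaces.linear sc sc g \<Longrightarrow> Vector_Spaces.linear sc sc (\<lambda>x. S (g x))"
  using hopf_algebra Vector_Spaces.linear_compose[of sc sc g sc S]
  by (simp add: hopf_algebra_def o_def)

lemma psum_Delta_add: "bilin_form sc \<beta> \<Longrightarrow> psum (\<Delta> (a + b)) \<beta> = psum (\<Delta> a) \<beta> + psum (\<Delta> b) \<beta>"
  using hopf_algebra teq2D unfolding hopf_algebra_def by (metis psum_append)

lemma psum_Delta_scale: "bilin_form sc \<beta> \<Longrightarrow> psum (\<Delta> (sc c a)) \<beta> = c * psum (\<Delta> a) \<beta>"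
proof -
  assume \<beta>: "bilin_form sc \<beta>"
  then have "psum (\<Delta> (sc c a)) \<beta> = psum (map (\<lambda>(x,y). (sc c x, y)) (\<Delta> a)) \<beta>"
    using hopf_algebra teq2D unfolding hopf_algebra_def by blast
  also have "\<dots> = psum (\<Delta> a) (\<lambda>x y. c * \<beta> x y)"
    using \<beta> by (simp add: psum_map bilin_form_def klin_iff)
  finally show ?thesis
    by (simp add: psum_cmult)
qed

lemma klin_psum_Delta:
  "Vector_Spaces.linear sc sc g \<Longrightarrow> bilin_form sc \<beta> \<Longrightarrow> klin sc (\<lambda>x. psum (\<Delta> (g x)) \<beta>)"
  by (simp add: klin_iff linear_iff psum_Delta_add psum_Delta_scale)

lemma psum_Delta_mult: "bilin_form sc \<beta> \<Longrightarrow>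
  psum (\<Delta> (a * b)) \<beta> = psum (\<Delta> a) (\<lambda>x y. psum (\<Delta> b) (\<lambda>u v. \<beta> (x * u) (y * v)))"
proof -
  assume "bilin_form sc \<beta>"
  then have "psum (\<Delta> (a * b)) \<beta> = psum (tmul2 (\<Delta> a) (\<Delta> b)) \<beta>"
    using hopf_algebra teq2D unfolding hopf_algebra_def by blast
  then show ?thesis
    by (simp add: tmul2_def psum_concat_map psum_map split_def)
qed

lemma psum_Delta_one: "bilin_form sc \<beta> \<Longrightarrow> psum (\<Delta> 1) \<beta> = \<beta> 1 1"
  using hopf_algebra teq2D unfolding hopf_algebra_def by fastforce

lemma psum_Delta_coassoc: "trilin_form sc \<tau> \<Longrightarrow>
  psum (\<Delta> h) (\<lambda>x y. psum (\<Delta> x) (\<lambda>x1 x2. \<tau> x1 x2 y))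
  = psum (\<Delta> h) (\<lambda>x y. psum (\<Delta> y) (\<lambda>y1 y2. \<tau> x y1 y2))"
  using hopf_algebra unfolding hopf_algebra_def teq3_def
  by (simp add: Delta3_def psum_def split_def o_def sum_list_map_concat)

lemma psum_Delta_counit_left: "klin sc f \<Longrightarrow> psum (\<Delta> h) (\<lambda>x y. \<epsilon> x * f y) = f h"
  using hopf_algebra klin_psum_push[of f "\<Delta> h" "\<lambda>x y. sc (\<epsilon> x) y"]
  by (simp add: hopf_algebra_def psum_def klin_iff)

lemma psum_Delta_counit_right: "klin sc f \<Longrightarrow> psum (\<Delta> h) (\<lambda>x y. \<epsilon> y * f x) = f h"
  using hopf_algebra klin_psum_push[of f "\<Delta> h" "\<lambda>x y. sc (\<epsilon> y) x"]
  by (simp add: hopf_algebra_def psum_def klin_iff)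

lemma psum_Delta_antipode_left: "klin sc f \<Longrightarrow> psum (\<Delta> h) (\<lambda>x y. f (S x * y)) = \<epsilon> h * f 1"
  using hopf_algebra klin_psum_push[of f "\<Delta> h" "\<lambda>x y. S x * y"]
  by (simp add: hopf_algebra_def psum_def klin_iff)

lemma psum_Delta_antipode_right: "klin sc f \<Longrightarrow> psum (\<Delta> h) (\<lambda>x y. f (x * S y)) = \<epsilon> h * f 1"
  using hopf_algebra klin_psum_push[of f "\<Delta> h" "\<lambda>x y. x * S y"]
  by (simp add: hopf_algebra_def psum_def klin_iff)

lemmas linearity_intros = linear_ident linear_mult_left linear_mult_right linear_antipode
  klin_psum klin_psum_Delta bilin_formI trilin_formI

lemma psum_Delta_mult_flip_antipode:
  assumes \<beta>: "bilin_form sc \<beta>"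
  shows "psum (\<Delta> y) (\<lambda>y1 y2. psum (\<Delta> y1) (\<lambda>p q. psum (\<Delta> y2) (\<lambda>m n. \<beta> (u*p*S n) (v*q*S m))))
    = \<epsilon> y * \<beta> u v"
proof -
  note \<beta>_lin = bilin_form_linear_fst[OF \<beta>] bilin_form_linear_snd[OF \<beta>]
  have inner: "psum (\<Delta> z) (\<lambda>q z2. psum (\<Delta> z2) (\<lambda>m n. \<beta> (u*p*S n) (v*q*S m))) = \<beta> (u*p*S z) v"
    for p z
  proof -
    have "psum (\<Delta> z) (\<lambda>q z2. psum (\<Delta> z2) (\<lambda>m n. \<beta> (u*p*S n) (v*q*S m)))
        = psum (\<Delta> z) (\<lambda>w n. psum (\<Delta> w) (\<lambda>q m. \<beta> (u*p*S n) (v*(q*S m))))"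
      by (subst psum_Delta_coassoc) (intro linearity_intros \<beta>_lin, simp add: mult.assoc)
    also have "\<dots> = psum (\<Delta> z) (\<lambda>w n. \<epsilon> w * \<beta> (u*p*S n) v)"
      by (intro psum_cong psum_Delta_antipode_right[where f="\<lambda>t. \<beta> _ (v*t)", simplified])
        (intro linearity_intros \<beta>_lin)
    also have "\<dots> = \<beta> (u*p*S z) v"
      by (rule psum_Delta_counit_left) (intro linearity_intros \<beta>_lin)
    finally show ?thesis .
  qed
  have "psum (\<Delta> y) (\<lambda>y1 y2. psum (\<Delta> y1) (\<lambda>p q. psum (\<Delta> y2) (\<lambda>m n. \<beta> (u*p*S n) (v*q*S m))))
      = psum (\<Delta> y) (\<lambda>p z. psum (\<Delta> z) (\<lambda>q y2. psum (\<Delta> y2) (\<lambda>m n. \<beta> (u*p*S n) (v*q*S m))))"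
    by (rule psum_Delta_coassoc) (intro linearity_intros \<beta>_lin)
  also have "\<dots> = psum (\<Delta> y) (\<lambda>p z. \<beta> (u*(p*S z)) v)"
    using inner by (simp add: mult.assoc)
  also have "\<dots> = \<epsilon> y * \<beta> u v"
    by (rule psum_Delta_antipode_right[where f="\<lambda>t. \<beta> (u*t) v", simplified])
      (intro linearity_intros \<beta>_lin)
  finally show ?thesis .
qed

text \<open>Both sides are convolution inverses of Delta: the product
  Delta(S a_1) Delta(a_2) (S(a_4) (x) S(a_3)) is evaluated in two ways.\<close>
lemma psum_Delta_antipode:
  assumes \<beta>: "bilin_form sc \<beta>"
  shows "psum (\<Delta> (S a)) \<beta> = psum (\<Delta> a) (\<lambda>x y. \<beta> (S y) (S x))"
proof -
  note \<beta>_lin = bilin_form_linear_fst[OF \<beta>] bilin_form_linear_snd[OF \<beta>]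
  define Q where "Q a1 a2 a3 = psum (\<Delta> (S a1)) (\<lambda>u v. psum (\<Delta> a2) (\<lambda>p q.
      psum (\<Delta> a3) (\<lambda>m n. \<beta> (u*p*S n) (v*q*S m))))" for a1 a2 a3
  have "psum (\<Delta> w) (\<lambda>a1 a2. Q a1 a2 a3) = \<epsilon> w * psum (\<Delta> a3) (\<lambda>m n. \<beta> (S n) (S m))" for w a3
  proof -
    define \<gamma> where "\<gamma> c d = psum (\<Delta> a3) (\<lambda>m n. \<beta> (c * S n) (d * S m))" for c d
    have \<gamma>: "bilin_form sc \<gamma>"
      unfolding \<gamma>_def by (intro linearity_intros \<beta>_lin)
    have "psum (\<Delta> w) (\<lambda>a1 a2. Q a1 a2 a3) = psum (\<Delta> w) (\<lambda>a1 a2. psum (\<Delta> (S a1 * a2)) \<gamma>)"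
      unfolding psum_Delta_mult[OF \<gamma>] Q_def \<gamma>_def by simp
    also have "\<dots> = \<epsilon> w * \<gamma> 1 1"
      using psum_Delta_antipode_left[where f="\<lambda>z. psum (\<Delta> z) \<gamma>"]
      by (simp add: psum_Delta_one[OF \<gamma>] linearity_intros \<gamma>)
    finally show ?thesis
      by (simp add: \<gamma>_def)
  qed
  then have "psum (\<Delta> a) (\<lambda>w a3. psum (\<Delta> w) (\<lambda>a1 a2. Q a1 a2 a3)) = psum (\<Delta> a) (\<lambda>x y. \<beta> (S y) (S x))"
    by (simp add: psum_Delta_counit_left linearity_intros \<beta>_lin)
  moreover have "psum (\<Delta> a) (\<lambda>w a3. psum (\<Delta> w) (\<lambda>a1 a2. Q a1 a2 a3)) = psum (\<Delta> (S a)) \<beta>"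
  proof -
    have "psum (\<Delta> a) (\<lambda>w a3. psum (\<Delta> w) (\<lambda>a1 a2. Q a1 a2 a3))
        = psum (\<Delta> a) (\<lambda>a1 y. psum (\<Delta> y) (\<lambda>a2 a3. Q a1 a2 a3))"
      by (rule psum_Delta_coassoc) (unfold Q_def, intro linearity_intros \<beta>_lin)
    also have "\<dots> = psum (\<Delta> a) (\<lambda>a1 y. \<epsilon> y * psum (\<Delta> (S a1)) \<beta>)"
    proof (rule psum_cong)
      fix a1 y
      have "psum (\<Delta> y) (Q a1) = psum (\<Delta> (S a1)) (\<lambda>u v. psum (\<Delta> y) (\<lambda>a2 a3.
          psum (\<Delta> a2) (\<lambda>p q. psum (\<Delta> a3) (\<lambda>m n. \<beta> (u*p*S n) (v*q*S m)))))"
        unfolding Q_def by (rule psum_swap)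
      then show "psum (\<Delta> y) (Q a1) = \<epsilon> y * psum (\<Delta> (S a1)) \<beta>"
        by (simp add: psum_Delta_mult_flip_antipode[OF \<beta>] psum_cmult)
    qed
    also have "\<dots> = psum (\<Delta> (S a)) \<beta>"
      by (rule psum_Delta_counit_right) (intro linearity_intros \<beta>)
    finally show ?thesis .
  qed
  ultimately show ?thesis
    by simp
qed

lemma psum_Delta_coassoc5:
  assumes "\<And>b c d e. klin sc (\<lambda>a. W a b c d e)" "\<And>a c d e. klin sc (\<lambda>b. W a b c d e)"
    "\<And>a b d e. klin sc (\<lambda>c. W a b c d e)" "\<And>a b c e. klin sc (\<lambda>d. W a b c d e)"
    "\<And>a b c d. klin sc (W a b c d)"
  shows "psum (\<Delta> h) (\<lambda>u h3. psum (\<Delta> u) (\<lambda>h1 h2. psum (\<Delta> h1) (\<lambda>a b. psum (\<Delta> h3) (\<lambda>e f. W a b h2 e f))))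
       = psum (\<Delta> h) (\<lambda>m y. psum (\<Delta> m) (\<lambda>x k. psum (\<Delta> k) (\<lambda>n k3. psum (\<Delta> n) (\<lambda>k1 k2. W x k1 k2 k3 y))))"
proof -
  have "psum (\<Delta> h) (\<lambda>u h3. psum (\<Delta> u) (\<lambda>h1 h2. psum (\<Delta> h1) (\<lambda>a b. psum (\<Delta> h3) (\<lambda>e f. W a b h2 e f))))
     = psum (\<Delta> h) (\<lambda>u h3. psum (\<Delta> u) (\<lambda>a w. psum (\<Delta> w) (\<lambda>b h2. psum (\<Delta> h3) (\<lambda>e f. W a b h2 e f))))"
    by (intro psum_cong psum_Delta_coassoc[where \<tau>="\<lambda>a b h2. psum (\<Delta> _) (W a b h2)"])
      (intro linearity_intros assms)
  also have "\<dots> = psum (\<Delta> h) (\<lambda>u h3. psum (\<Delta> h3) (\<lambda>e f. psum (\<Delta> u) (\<lambda>a w. psum (\<Delta> w) (\<lambda>b h2. W a b h2 e f))))"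
    by (intro psum_cong psum_swap_nested)
  also have "\<dots> = psum (\<Delta> h) (\<lambda>g f. psum (\<Delta> g) (\<lambda>u e. psum (\<Delta> u) (\<lambda>a w. psum (\<Delta> w) (\<lambda>b h2. W a b h2 e f))))"
    by (rule psum_Delta_coassoc[symmetric]) (intro linearity_intros assms)
  also have "\<dots> = psum (\<Delta> h) (\<lambda>g f. psum (\<Delta> g) (\<lambda>a k. psum (\<Delta> k) (\<lambda>w e. psum (\<Delta> w) (\<lambda>b h2. W a b h2 e f))))"
    by (intro psum_cong psum_Delta_coassoc[where \<tau>="\<lambda>a w e. psum (\<Delta> w) (\<lambda>b h2. W a b h2 e _)"])
      (intro linearity_intros assms)
  finally show ?thesis .
qed

end

lemma psum_nu:
  "psum (nu \<Delta> S R h) G = psum R (\<lambda>r1 r2. psum (\<Delta> h) (\<lambda>u h3. psum (\<Delta> u) (\<lambda>h1 h2.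
     psum R (\<lambda>s1 s2. G (r2*h2*s2) (S h1 * S r1 * h3 * s1)))))"
  by (simp add: nu_def Delta3_def psum_def split_def o_def sum_list_map_concat)

lemma sum_list_id_tensor_Delta:
  "(\<Sum>(a,b,c)\<leftarrow>[(a, z1, z2). (a,z) \<leftarrow> L, (z1,z2) \<leftarrow> \<Delta> z]. \<tau> a b c) = psum L (\<lambda>a z. psum (\<Delta> z) (\<tau> a))"
  by (simp add: psum_def split_def o_def sum_list_map_concat)

definition sandwich ::
  "('h::ring_1 \<Rightarrow> ('h \<times> 'h) list) \<Rightarrow> ('h \<Rightarrow> 'h) \<Rightarrow> ('h \<times> 'h) list \<Rightarrow> 'h \<Rightarrow> ('h \<Rightarrow> ('h \<times> 'h) list)
     \<Rightarrow> ('h \<times> 'h \<times> 'h) list" where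
  "sandwich \<Delta> S R h N = [(r2 * a * p2, z, S x * S r1 * y * p1).
     (r1,r2) \<leftarrow> R, (x,k,y) \<leftarrow> Delta3 \<Delta> h, (p1,p2) \<leftarrow> R, (a,z) \<leftarrow> N k]"

lemma sum_list_sandwich:
  "(\<Sum>(a,b,c)\<leftarrow>sandwich \<Delta> S R h N. \<tau> a b c) = psum R (\<lambda>r1 r2. psum (\<Delta> h) (\<lambda>m y.
     psum (\<Delta> m) (\<lambda>x k. psum R (\<lambda>p1 p2. psum (N k) (\<lambda>a z. \<tau> (r2*a*p2) z (S x*S r1*y*p1))))))"
  by (simp add: sandwich_def Delta3_def psum_def split_def o_def sum_list_map_concat)

lemma sandwich_centre:
  "(\<And>k. \<forall>(a,z) \<in> set (N k). z \<in> centre) \<Longrightarrow> \<forall>(a,z,b) \<in> set (sandwich \<Delta> S R h N). z \<in> centre"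
  by (fastforce simp: sandwich_def)

lemma (in hopf) sandwich_cong:
  assumes "\<And>k. teq2 sc (N k) (N' k)"
  shows "teq3 sc (sandwich \<Delta> S R h N) (sandwich \<Delta> S R h N')"
  unfolding teq3_def sum_list_sandwich
proof (intro allI impI psum_cong)
  fix \<tau> r2 x y r1 p1 p2 k
  assume \<tau>: "trilin_form sc \<tau>"
  show "psum (N k) (\<lambda>a z. \<tau> (r2*a*p2) z (S x*S r1*y*p1)) = psum (N' k) (\<lambda>a z. \<tau> (r2*a*p2) z (S x*S r1*y*p1))"
    by (rule teq2D[OF assms]) (intro linearity_intros trilin_form_linear_fst[OF \<tau>] trilin_form_linear_snd[OF \<tau>])
qed

locale sqt_hopf =
  fixes sc :: "'k::field \<Rightarrow> 'h::ring_1 \<Rightarrow> 'h" and \<Delta> :: "'h \<Rightarrow> ('h \<times> 'h) list"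
    and \<epsilon> :: "'h \<Rightarrow> 'k" and S :: "'h \<Rightarrow> 'h" and R :: "('h \<times> 'h) list"
  assumes semiquasitriangular: "semiquasitriangular sc \<Delta> \<epsilon> S R"
begin

sublocale hopf sc \<Delta> \<epsilon> S
  using semiquasitriangular by unfold_locales (simp add: semiquasitriangular_def)

lemma psum_R_Delta_fst: "trilin_form sc \<tau> \<Longrightarrow>
  psum R (\<lambda>r1 r2. psum (\<Delta> r1) (\<lambda>x1 x2. \<tau> x1 x2 r2)) = psum R (\<lambda>r1 r2. psum R (\<lambda>s1 s2. \<tau> r1 s1 (r2 * s2)))"
  using semiquasitriangular unfolding semiquasitriangular_def teq3_def
  by (simp add: psum_def split_def o_def sum_list_map_concat)

lemma psum_Delta_nu_snd:
  assumes \<tau>: "trilin_form sc \<tau>"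
  shows "psum R (\<lambda>s1 s2. psum (\<Delta> (S h1 * S r1 * h3 * s1)) (\<tau> (r2*h2*s2)))
   = psum (\<Delta> r1) (\<lambda>c d. psum (\<Delta> h1) (\<lambda>a b. psum (\<Delta> h3) (\<lambda>e f.
       psum R (\<lambda>s1 s2. psum R (\<lambda>t1 t2. \<tau> (r2*h2*(s2*t2)) (S b*S d*e*s1) (S a*S c*f*t1))))))"
proof -
  note \<tau>_lin = trilin_form_linear_fst[OF \<tau>] trilin_form_linear_snd[OF \<tau>] trilin_form_linear_thd[OF \<tau>]
  define B where "B x y = psum R (\<lambda>s1 s2. psum R (\<lambda>t1 t2. \<tau> (r2*h2*(s2*t2)) (x*s1) (y*t1)))" for x y
  have B: "bilin_form sc B"
    unfolding B_def by (intro linearity_intros \<tau>_lin)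
  define \<gamma> where "\<gamma> x y = psum (\<Delta> h3) (\<lambda>e f. B (x*e) (y*f))" for x y
  have \<gamma>: "bilin_form sc \<gamma>"
    unfolding \<gamma>_def B_def by (intro linearity_intros \<tau>_lin)
  have "psum R (\<lambda>s1 s2. psum (\<Delta> (S h1 * S r1 * h3 * s1)) (\<tau> (r2*h2*s2)))
      = psum R (\<lambda>s1 s2. psum (\<Delta> (S h1 * S r1 * h3)) (\<lambda>x y. psum (\<Delta> s1) (\<lambda>u v. \<tau> (r2*h2*s2) (x*u) (y*v))))"
    by (intro psum_cong psum_Delta_mult) (intro linearity_intros \<tau>_lin)
  also have "\<dots> = psum (\<Delta> (S h1 * S r1 * h3)) (\<lambda>x y. psum R (\<lambda>s1 s2. psum (\<Delta> s1) (\<lambda>u v. \<tau> (r2*h2*s2) (x*u) (y*v))))"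
    by (rule psum_swap)
  also have "\<dots> = psum (\<Delta> (S h1 * S r1 * h3)) B"
    unfolding B_def by (intro psum_cong psum_R_Delta_fst) (intro linearity_intros \<tau>_lin)
  also have "\<dots> = psum (\<Delta> (S h1 * S r1)) \<gamma>"
    unfolding \<gamma>_def by (rule psum_Delta_mult[OF B])
  also have "\<dots> = psum (\<Delta> (S h1)) (\<lambda>a b. psum (\<Delta> (S r1)) (\<lambda>c d. \<gamma> (a*c) (b*d)))"
    by (rule psum_Delta_mult[OF \<gamma>])
  also have "\<dots> = psum (\<Delta> (S r1)) (\<lambda>c d. psum (\<Delta> (S h1)) (\<lambda>a b. \<gamma> (a*c) (b*d)))"
    by (rule psum_swap)
  also have "\<dots> = psum (\<Delta> r1) (\<lambda>c d. psum (\<Delta> h1) (\<lambda>a b. \<gamma> (S b*S d) (S a*S c)))"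
  proof -
    have "psum (\<Delta> (S h1)) (\<lambda>a b. \<gamma> (a*c) (b*d)) = psum (\<Delta> h1) (\<lambda>a b. \<gamma> (S b*c) (S a*d))" for c d
      by (rule psum_Delta_antipode) (unfold \<gamma>_def B_def, intro linearity_intros \<tau>_lin)
    then show ?thesis
      by (simp only:) (rule psum_Delta_antipode, unfold \<gamma>_def B_def, intro linearity_intros \<tau>_lin)
  qed
  finally show ?thesis
    unfolding \<gamma>_def B_def by (simp add: mult.assoc)
qed

lemma psum_comult_nu:
  assumes \<tau>: "trilin_form sc \<tau>"
  shows "psum (nu \<Delta> S R h) (\<lambda>a z. psum (\<Delta> z) (\<tau> a))
    = psum R (\<lambda>r1 r2. psum (\<Delta> h) (\<lambda>m y. psum (\<Delta> m) (\<lambda>x k. psum R (\<lambda>p1 p2.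
      psum (nu \<Delta> S R k) (\<lambda>a z. \<tau> (r2*a*p2) z (S x*S r1*y*p1))))))"
proof -
  note \<tau>_lin = trilin_form_linear_fst[OF \<tau>] trilin_form_linear_snd[OF \<tau>] trilin_form_linear_thd[OF \<tau>]
  have swap_R: "psum (\<Delta> z) (\<lambda>x y. psum R (F x y)) = psum R (\<lambda>u v. psum (\<Delta> z) (\<lambda>x y. F x y u v))"
    for z F
    by (rule psum_swap)
  have "psum (nu \<Delta> S R h) (\<lambda>a z. psum (\<Delta> z) (\<tau> a))
      = psum R (\<lambda>r1 r2. psum (\<Delta> h) (\<lambda>u h3. psum (\<Delta> u) (\<lambda>h1 h2.
      psum R (\<lambda>s1 s2. psum (\<Delta> (S h1 * S r1 * h3 * s1)) (\<tau> (r2*h2*s2))))))"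
    by (rule psum_nu)
  also have "\<dots> = psum R (\<lambda>r1 r2. psum (\<Delta> h) (\<lambda>u h3. psum (\<Delta> u) (\<lambda>h1 h2.
      psum (\<Delta> r1) (\<lambda>c d. psum (\<Delta> h1) (\<lambda>a b. psum (\<Delta> h3) (\<lambda>e f.
      psum R (\<lambda>s1 s2. psum R (\<lambda>t1 t2. \<tau> (r2*h2*(s2*t2)) (S b*S d*e*s1) (S a*S c*f*t1)))))))))"
    by (simp only: psum_Delta_nu_snd[OF \<tau>])
  also have "\<dots> = psum R (\<lambda>r1 r2. psum (\<Delta> r1) (\<lambda>c d. psum (\<Delta> h) (\<lambda>u h3. psum (\<Delta> u) (\<lambda>h1 h2.
      psum (\<Delta> h1) (\<lambda>a b. psum (\<Delta> h3) (\<lambda>e f.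
      psum R (\<lambda>s1 s2. psum R (\<lambda>t1 t2. \<tau> (r2*h2*(s2*t2)) (S b*S d*e*s1) (S a*S c*f*t1)))))))))"
    by (intro psum_cong psum_swap_nested)
  also have "\<dots> = psum R (\<lambda>r1 r2. psum R (\<lambda>q1 q2. psum (\<Delta> h) (\<lambda>u h3. psum (\<Delta> u) (\<lambda>h1 h2.
      psum (\<Delta> h1) (\<lambda>a b. psum (\<Delta> h3) (\<lambda>e f.
      psum R (\<lambda>s1 s2. psum R (\<lambda>t1 t2. \<tau> (r2*q2*h2*(s2*t2)) (S b*S q1*e*s1) (S a*S r1*f*t1)))))))))"
    by (rule psum_R_Delta_fst) (intro linearity_intros \<tau>_lin)
  also have "\<dots> = psum R (\<lambda>r1 r2. psum R (\<lambda>q1 q2. psum (\<Delta> h) (\<lambda>m y. psum (\<Delta> m) (\<lambda>x k.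
      psum (\<Delta> k) (\<lambda>n k3. psum (\<Delta> n) (\<lambda>k1 k2.
      psum R (\<lambda>s1 s2. psum R (\<lambda>t1 t2. \<tau> (r2*q2*k2*(s2*t2)) (S k1*S q1*k3*s1) (S x*S r1*y*t1)))))))))"
    by (intro psum_cong psum_Delta_coassoc5) (intro linearity_intros \<tau>_lin)+
  also have "\<dots> = psum R (\<lambda>r1 r2. psum (\<Delta> h) (\<lambda>m y. psum (\<Delta> m) (\<lambda>x k. psum R (\<lambda>p1 p2.
      psum (nu \<Delta> S R k) (\<lambda>a z. \<tau> (r2*a*p2) z (S x*S r1*y*p1))))))"
    unfolding psum_nu by (simp only: swap_R mult.assoc) (intro psum_cong psum_swap_nested)
  finally show ?thesis .
qed

theorem comult_nu:
  "teq3 sc [(a, z1, z2). (a,z) \<leftarrow> nu \<Delta> S R h, (z1,z2) \<leftarrow> \<Delta> z] (sandwich \<Delta> S R h (nu \<Delta> S R))"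
  unfolding teq3_def sum_list_sandwich sum_list_id_tensor_Delta by (simp add: psum_comult_nu)

end

theorem lemma2p2:
  fixes sc :: "'k::field \<Rightarrow> 'h::ring_1 \<Rightarrow> 'h"
    and \<Delta> :: "'h \<Rightarrow> ('h \<times> 'h) list" and \<epsilon> :: "'h \<Rightarrow> 'k" and S :: "'h \<Rightarrow> 'h"
    and R :: "('h \<times> 'h) list" and h :: 'h
  assumes "semiquasitriangular sc \<Delta> \<epsilon> S R"
  shows "\<exists>ys :: ('h \<times> 'h \<times> 'h) list. (\<forall>(a,z,b) \<in> set ys. z \<in> centre)
           \<and> teq3 sc [(a, z1, z2). (a,z) \<leftarrow> nu \<Delta> S R h, (z1,z2) \<leftarrow> \<Delta> z] ys"
proof -
  interpret sqt_hopf sc \<Delta> \<epsilon> S R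
    using assms by unfold_locales
  obtain N where N: "\<And>k. (\<forall>(a,z) \<in> set (N k). z \<in> centre) \<and> teq2 sc (nu \<Delta> S R k) (N k)"
    using assms unfolding semiquasitriangular_def by metis
  have "teq3 sc [(a, z1, z2). (a,z) \<leftarrow> nu \<Delta> S R h, (z1,z2) \<leftarrow> \<Delta> z] (sandwich \<Delta> S R h N)"
    using comult_nu sandwich_cong N by (blast intro: teq3_trans)
  moreover have "\<forall>(a,z,b) \<in> set (sandwich \<Delta> S R h N). z \<in> centre"
    using N by (intro sandwich_centre) blast
  ultimately show ?thesis
    by blast
qed

end
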